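(* Let $\mathcal{C}$ be a category with finite coproducts and let $\mathbf{Mon}(\mathcal{C})$ be the category of monads on $\mathcal{C}$ and monad morphisms. The assignment sending a monad $M$ to its semifree monad $M^{\mathrm{s}}$ and a monad morphism $\sigma:M\Rightarrow T$ to $\sigma^{\mathrm{s}}$ with components $\sigma^{\mathrm{s}}_X=\mathrm{id}_X+\sigma_X: X+MX\to X+TX$ is a functor $(-)^{\mathrm{s}}:\mathbf{Mon}(\mathcal{C})\to\mathbf{Mon}(\mathcal{C})$ (in particular, $\sigma^{\mathrm{s}}$ is a monad morphism $M^{\mathrm{s}}\Rightarrow T^{\mathrm{s}}$).
   Context: For a monad $(M,\eta,\mu)$ on a category with finite coproducts, the semifree monad is $M^{\mathrm{s}}=\mathrm{Id}+M$ with unit $\eta^{\mathrm{s}}=\mathrm{inl}$ and multiplication $\mu^{\mathrm{s}}=[\mathrm{id}_{\mathrm{Id}+M},\ \mathrm{inr}\circ\mu\circ M[\eta,\mathrm{id}_M]]$, where $[f,g]$ denotes copairing. A monad morphism $\sigma:M\Rightarrow T$ is a natural transformation with $\sigma\circ\eta^M=\eta^T$ and $\sigma\circ\mu^M=\mu^T\circ\sigma_T\circ M\sigma$. *)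

theory Defs
  imports Main
begin

record ('o,'m) category_data =
  obj  :: "'o set"
  arr  :: "'m set"
  dom  :: "'m \<Rightarrow> 'o"
  cod  :: "'m \<Rightarrow> 'o"
  idm  :: "'o \<Rightarrow> 'm"
  comp :: "'m \<Rightarrow> 'm \<Rightarrow> 'm"   (* comp C g f = g \<circ> f *)

definition hom :: "('o,'m) category_data \<Rightarrow> 'o \<Rightarrow> 'o \<Rightarrow> 'm set" where
  "hom C A B = {f \<in> arr C. dom C f = A \<and> cod C f = B}"

definition is_category :: "('o,'m) category_data \<Rightarrow> bool" where
  "is_category C \<longleftrightarrow>
     (\<forall>f\<in>arr C. dom C f \<in> obj C \<and> cod C f \<in> obj C)
   \<and> (\<forall>A\<in>obj C. idm C A \<in> hom C A A)
   \<and> (\<forall>f\<in>arr C. \<forall>g\<in>arr C. cod C f = dom C g \<longrightarrow>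
        comp C g f \<in> hom C (dom C f) (cod C g))
   \<and> (\<forall>f\<in>arr C. comp C f (idm C (dom C f)) = f \<and> comp C (idm C (cod C f)) f = f)
   \<and> (\<forall>f\<in>arr C. \<forall>g\<in>arr C. \<forall>h\<in>arr C. cod C f = dom C g \<longrightarrow> cod C g = dom C h \<longrightarrow>
        comp C h (comp C g f) = comp C (comp C h g) f)"

definition is_coproduct ::
  "('o,'m) category_data \<Rightarrow> 'o \<Rightarrow> 'o \<Rightarrow> 'o \<Rightarrow> 'm \<Rightarrow> 'm \<Rightarrow> bool" where
  "is_coproduct C A B S i j \<longleftrightarrow>
     S \<in> obj C \<and> i \<in> hom C A S \<and> j \<in> hom C B S
   \<and> (\<forall>Z\<in>obj C. \<forall>f\<in>hom C A Z. \<forall>g\<in>hom C B Z.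
        \<exists>!h. h \<in> hom C S Z \<and> comp C h i = f \<and> comp C h j = g)"

definition is_initial :: "('o,'m) category_data \<Rightarrow> 'o \<Rightarrow> bool" where
  "is_initial C I \<longleftrightarrow> I \<in> obj C \<and> (\<forall>Z\<in>obj C. \<exists>!h. h \<in> hom C I Z)"

record ('o,'m) coproduct_choice =
  cp   :: "'o \<Rightarrow> 'o \<Rightarrow> 'o"
  cinl :: "'o \<Rightarrow> 'o \<Rightarrow> 'm"
  cinr :: "'o \<Rightarrow> 'o \<Rightarrow> 'm"

definition is_coproduct_choice ::
  "('o,'m) category_data \<Rightarrow> ('o,'m) coproduct_choice \<Rightarrow> bool" where
  "is_coproduct_choice C K \<longleftrightarrow>
     (\<forall>A\<in>obj C. \<forall>B\<in>obj C. is_coproduct C A B (cp K A B) (cinl K A B) (cinr K A B))"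

definition copair ::
  "('o,'m) category_data \<Rightarrow> ('o,'m) coproduct_choice \<Rightarrow> 'm \<Rightarrow> 'm \<Rightarrow> 'm" where
  "copair C K f g = (THE h. h \<in> hom C (cp K (dom C f) (dom C g)) (cod C f)
      \<and> comp C h (cinl K (dom C f) (dom C g)) = f
      \<and> comp C h (cinr K (dom C f) (dom C g)) = g)"

definition coprod_map ::
  "('o,'m) category_data \<Rightarrow> ('o,'m) coproduct_choice \<Rightarrow> 'm \<Rightarrow> 'm \<Rightarrow> 'm" where
  "coprod_map C K f g =
     copair C K (comp C (cinl K (cod C f) (cod C g)) f) (comp C (cinr K (cod C f) (cod C g)) g)"

definition is_endofunctor ::
  "('o,'m) category_data \<Rightarrow> ('o \<Rightarrow> 'o) \<Rightarrow> ('m \<Rightarrow> 'm) \<Rightarrow> bool" where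
  "is_endofunctor C Fo Fm \<longleftrightarrow>
     (\<forall>A\<in>obj C. Fo A \<in> obj C)
   \<and> (\<forall>f\<in>arr C. Fm f \<in> hom C (Fo (dom C f)) (Fo (cod C f)))
   \<and> (\<forall>A\<in>obj C. Fm (idm C A) = idm C (Fo A))
   \<and> (\<forall>f\<in>arr C. \<forall>g\<in>arr C. cod C f = dom C g \<longrightarrow> Fm (comp C g f) = comp C (Fm g) (Fm f))"

definition is_nat_trans ::
  "('o,'m) category_data \<Rightarrow> ('o \<Rightarrow> 'o) \<Rightarrow> ('m \<Rightarrow> 'm) \<Rightarrow> ('o \<Rightarrow> 'o) \<Rightarrow> ('m \<Rightarrow> 'm)
     \<Rightarrow> ('o \<Rightarrow> 'm) \<Rightarrow> bool" where
  "is_nat_trans C Fo Fm Go Gm \<alpha> \<longleftrightarrow>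
     (\<forall>A\<in>obj C. \<alpha> A \<in> hom C (Fo A) (Go A))
   \<and> (\<forall>f\<in>arr C. comp C (\<alpha> (cod C f)) (Fm f) = comp C (Gm f) (\<alpha> (dom C f)))"

record ('o,'m) monad_data =
  mo   :: "'o \<Rightarrow> 'o"
  mm   :: "'m \<Rightarrow> 'm"
  unit :: "'o \<Rightarrow> 'm"
  mult :: "'o \<Rightarrow> 'm"

definition is_monad :: "('o,'m) category_data \<Rightarrow> ('o,'m) monad_data \<Rightarrow> bool" where
  "is_monad C M \<longleftrightarrow>
     is_endofunctor C (mo M) (mm M)
   \<and> is_nat_trans C (\<lambda>A. A) (\<lambda>f. f) (mo M) (mm M) (unit M)
   \<and> is_nat_trans C (\<lambda>A. mo M (mo M A)) (\<lambda>f. mm M (mm M f)) (mo M) (mm M) (mult M)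
   \<and> (\<forall>A\<in>obj C. comp C (mult M A) (mm M (unit M A)) = idm C (mo M A))
   \<and> (\<forall>A\<in>obj C. comp C (mult M A) (unit M (mo M A)) = idm C (mo M A))
   \<and> (\<forall>A\<in>obj C. comp C (mult M A) (mm M (mult M A)) = comp C (mult M A) (mult M (mo M A)))"

definition is_monad_morphism ::
  "('o,'m) category_data \<Rightarrow> ('o,'m) monad_data \<Rightarrow> ('o,'m) monad_data \<Rightarrow> ('o \<Rightarrow> 'm) \<Rightarrow> bool" where
  "is_monad_morphism C M T \<sigma> \<longleftrightarrow>
     is_nat_trans C (mo M) (mm M) (mo T) (mm T) \<sigma>
   \<and> (\<forall>A\<in>obj C. comp C (\<sigma> A) (unit M A) = unit T A)
   \<and> (\<forall>A\<in>obj C. comp C (\<sigma> A) (mult M A)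
        = comp C (mult T A) (comp C (\<sigma> (mo T A)) (mm M (\<sigma> A))))"

definition id_mmor :: "('o,'m) category_data \<Rightarrow> ('o,'m) monad_data \<Rightarrow> 'o \<Rightarrow> 'm" where
  "id_mmor C M = (\<lambda>A. idm C (mo M A))"

definition comp_mmor ::
  "('o,'m) category_data \<Rightarrow> ('o \<Rightarrow> 'm) \<Rightarrow> ('o \<Rightarrow> 'm) \<Rightarrow> 'o \<Rightarrow> 'm" where
  "comp_mmor C \<tau> \<sigma> = (\<lambda>A. comp C (\<tau> A) (\<sigma> A))"

definition semifree ::
  "('o,'m) category_data \<Rightarrow> ('o,'m) coproduct_choice \<Rightarrow> ('o,'m) monad_data \<Rightarrow> ('o,'m) monad_data" where
  "semifree C K M =
    \<lparr> mo = (\<lambda>A. cp K A (mo M A)),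
      mm = (\<lambda>f. coprod_map C K f (mm M f)),
      unit = (\<lambda>A. cinl K A (mo M A)),
      mult = (\<lambda>A. copair C K
                (idm C (cp K A (mo M A)))
                (comp C (cinr K A (mo M A))
                   (comp C (mult M A)
                      (mm M (copair C K (unit M A) (idm C (mo M A))))))) \<rparr>"

definition semifree_mor ::
  "('o,'m) category_data \<Rightarrow> ('o,'m) coproduct_choice \<Rightarrow> ('o \<Rightarrow> 'm) \<Rightarrow> 'o \<Rightarrow> 'm" where
  "semifree_mor C K \<sigma> = (\<lambda>A. coprod_map C K (idm C A) (\<sigma> A))"

end

theory Submission
  imports Defs
begin

text \<open>
  An equation between arrows out of a coproduct \<open>X + Y\<close> holds as soon as it holds after
  precomposition with both injections, and on the injections the semifree structure reduces to
  that of \<open>M\<close>. The one ingredient beyond this bookkeeping is the collapse map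
  \<open>e = [\<eta>, id] : X + MX \<rightarrow> MX\<close>: it is natural, multiplicative
  (\<open>e \<circ> \<mu>\<^sup>s = \<mu> \<circ> Me \<circ> e\<close>) and intertwines \<open>\<sigma>\<^sup>s\<close> with \<open>\<sigma>\<close>.
  With it, the monad laws of \<open>M\<^sup>s\<close> and the monad-morphism laws of \<open>\<sigma>\<^sup>s\<close> reduce to those
  of \<open>M\<close> and \<open>\<sigma>\<close>, while functoriality of \<open>(-)\<^sup>s\<close> is functoriality of \<open>f + g\<close>.
\<close>

locale category =
  fixes C :: "('o,'m) category_data"
  assumes is_category: "is_category C"
begin

abbreviation comp_syntax (infixr "\<cdot>" 55) where "g \<cdot> f \<equiv> comp C g f"

lemma dom_in_obj [simp]: "f \<in> arr C \<Longrightarrow> dom C f \<in> obj C"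
  using is_category unfolding is_category_def by blast

lemma cod_in_obj [simp]: "f \<in> arr C \<Longrightarrow> cod C f \<in> obj C"
  using is_category unfolding is_category_def by blast

lemma idm_in_arr [simp]: "A \<in> obj C \<Longrightarrow> idm C A \<in> arr C"
  and dom_idm [simp]: "A \<in> obj C \<Longrightarrow> dom C (idm C A) = A"
  and cod_idm [simp]: "A \<in> obj C \<Longrightarrow> cod C (idm C A) = A"
  using is_category unfolding is_category_def hom_def by blast+

lemma comp_in_arr [simp]: "f \<in> arr C \<Longrightarrow> g \<in> arr C \<Longrightarrow> cod C f = dom C g \<Longrightarrow> g \<cdot> f \<in> arr C"
  and dom_comp [simp]: "f \<in> arr C \<Longrightarrow> g \<in> arr C \<Longrightarrow> cod C f = dom C g \<Longrightarrow> dom C (g \<cdot> f) = dom C f"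
  and cod_comp [simp]: "f \<in> arr C \<Longrightarrow> g \<in> arr C \<Longrightarrow> cod C f = dom C g \<Longrightarrow> cod C (g \<cdot> f) = cod C g"
  using is_category unfolding is_category_def hom_def by blast+

lemma comp_idm_left [simp]: "f \<in> arr C \<Longrightarrow> cod C f = A \<Longrightarrow> idm C A \<cdot> f = f"
  and comp_idm_right [simp]: "f \<in> arr C \<Longrightarrow> dom C f = A \<Longrightarrow> f \<cdot> idm C A = f"
  using is_category unfolding is_category_def by blast+

lemma comp_assoc [simp]:
  "f \<in> arr C \<Longrightarrow> g \<in> arr C \<Longrightarrow> h \<in> arr C \<Longrightarrow> cod C f = dom C g \<Longrightarrow> cod C g = dom C h
   \<Longrightarrow> (h \<cdot> g) \<cdot> f = h \<cdot> (g \<cdot> f)"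
  using is_category unfolding is_category_def by metis

text \<open>The simplifier keeps composites right-associated, so an equation \<open>a \<cdot> b = c \<cdot> d\<close> is
  only usable as a rewrite rule in the form with a trailing arrow \<open>h\<close>; hence the \<open>_comp\<close> variants below.\<close>

lemma comp_eq_extend:
  assumes eq: "a \<cdot> b = c \<cdot> d"
    and "a \<in> arr C" "b \<in> arr C" "c \<in> arr C" "d \<in> arr C" "h \<in> arr C"
    and "cod C b = dom C a" "cod C d = dom C c" "cod C h = dom C b" "dom C d = dom C b"
  shows "a \<cdot> (b \<cdot> h) = c \<cdot> (d \<cdot> h)"
proof -
  have "a \<cdot> (b \<cdot> h) = (a \<cdot> b) \<cdot> h" using assms(2-) by simp
  also have "\<dots> = (c \<cdot> d) \<cdot> h" by (simp only: eq)
  also have "\<dots> = c \<cdot> (d \<cdot> h)" using assms(2-) by simp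
  finally show ?thesis .
qed

lemma mo_in_obj [simp]: "is_monad C M \<Longrightarrow> A \<in> obj C \<Longrightarrow> mo M A \<in> obj C"
  unfolding is_monad_def is_endofunctor_def by blast

lemma mm_in_arr [simp]: "is_monad C M \<Longrightarrow> f \<in> arr C \<Longrightarrow> mm M f \<in> arr C"
  and dom_mm [simp]: "is_monad C M \<Longrightarrow> f \<in> arr C \<Longrightarrow> dom C (mm M f) = mo M (dom C f)"
  and cod_mm [simp]: "is_monad C M \<Longrightarrow> f \<in> arr C \<Longrightarrow> cod C (mm M f) = mo M (cod C f)"
  unfolding is_monad_def is_endofunctor_def hom_def by blast+

lemma mm_idm [simp]: "is_monad C M \<Longrightarrow> A \<in> obj C \<Longrightarrow> mm M (idm C A) = idm C (mo M A)"
  unfolding is_monad_def is_endofunctor_def by blast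

lemma mm_comp [simp]:
  "is_monad C M \<Longrightarrow> f \<in> arr C \<Longrightarrow> g \<in> arr C \<Longrightarrow> cod C f = dom C g \<Longrightarrow> mm M (g \<cdot> f) = mm M g \<cdot> mm M f"
  unfolding is_monad_def is_endofunctor_def by blast

lemma mm_comp_eq:
  assumes M: "is_monad C M" and eq: "a \<cdot> b = c \<cdot> d"
    and "a \<in> arr C" "b \<in> arr C" "c \<in> arr C" "d \<in> arr C" "cod C b = dom C a" "cod C d = dom C c"
  shows "mm M a \<cdot> mm M b = mm M c \<cdot> mm M d"
  using mm_comp[OF M, of b a] mm_comp[OF M, of d c] assms(3-) by (simp add: eq)

lemma unit_in_arr [simp]: "is_monad C M \<Longrightarrow> A \<in> obj C \<Longrightarrow> unit M A \<in> arr C"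
  and dom_unit [simp]: "is_monad C M \<Longrightarrow> A \<in> obj C \<Longrightarrow> dom C (unit M A) = A"
  and cod_unit [simp]: "is_monad C M \<Longrightarrow> A \<in> obj C \<Longrightarrow> cod C (unit M A) = mo M A"
  unfolding is_monad_def is_nat_trans_def hom_def by blast+

lemma mult_in_arr [simp]: "is_monad C M \<Longrightarrow> A \<in> obj C \<Longrightarrow> mult M A \<in> arr C"
  and dom_mult [simp]: "is_monad C M \<Longrightarrow> A \<in> obj C \<Longrightarrow> dom C (mult M A) = mo M (mo M A)"
  and cod_mult [simp]: "is_monad C M \<Longrightarrow> A \<in> obj C \<Longrightarrow> cod C (mult M A) = mo M A"
  unfolding is_monad_def is_nat_trans_def hom_def by blast+

lemma unit_natural:
  "is_monad C M \<Longrightarrow> f \<in> arr C \<Longrightarrow> unit M (cod C f) \<cdot> f = mm M f \<cdot> unit M (dom C f)"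
  unfolding is_monad_def is_nat_trans_def by blast

lemma mult_natural:
  "is_monad C M \<Longrightarrow> f \<in> arr C \<Longrightarrow> mult M (cod C f) \<cdot> mm M (mm M f) = mm M f \<cdot> mult M (dom C f)"
  unfolding is_monad_def is_nat_trans_def by blast

lemma mult_mm_unit [simp]: "is_monad C M \<Longrightarrow> A \<in> obj C \<Longrightarrow> mult M A \<cdot> mm M (unit M A) = idm C (mo M A)"
  and mult_unit_mo [simp]: "is_monad C M \<Longrightarrow> A \<in> obj C \<Longrightarrow> mult M A \<cdot> unit M (mo M A) = idm C (mo M A)"
  and mult_assoc: "is_monad C M \<Longrightarrow> A \<in> obj C \<Longrightarrow> mult M A \<cdot> mm M (mult M A) = mult M A \<cdot> mult M (mo M A)"
  unfolding is_monad_def by blast+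

lemma mult_unit_mo_comp [simp]:
  "is_monad C M \<Longrightarrow> A \<in> obj C \<Longrightarrow> h \<in> arr C \<Longrightarrow> cod C h = mo M A \<Longrightarrow>
   mult M A \<cdot> (unit M (mo M A) \<cdot> h) = h"
  by (simp flip: comp_assoc)

lemma mult_assoc_comp:
  "is_monad C M \<Longrightarrow> A \<in> obj C \<Longrightarrow> h \<in> arr C \<Longrightarrow> cod C h = mo M (mo M (mo M A)) \<Longrightarrow>
   mult M A \<cdot> (mm M (mult M A) \<cdot> h) = mult M A \<cdot> (mult M (mo M A) \<cdot> h)"
  by (rule comp_eq_extend[OF mult_assoc]) auto

lemma mult_natural_comp:
  "is_monad C M \<Longrightarrow> f \<in> arr C \<Longrightarrow> cod C f = B \<Longrightarrow> h \<in> arr C \<Longrightarrow> cod C h = mo M (mo M (dom C f)) \<Longrightarrow>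
   mult M B \<cdot> (mm M (mm M f) \<cdot> h) = mm M f \<cdot> (mult M (dom C f) \<cdot> h)"
  using mult_natural[of M f] by (intro comp_eq_extend) auto

lemma mmor_in_arr [simp]: "is_monad_morphism C M T \<sigma> \<Longrightarrow> A \<in> obj C \<Longrightarrow> \<sigma> A \<in> arr C"
  and dom_mmor [simp]: "is_monad_morphism C M T \<sigma> \<Longrightarrow> A \<in> obj C \<Longrightarrow> dom C (\<sigma> A) = mo M A"
  and cod_mmor [simp]: "is_monad_morphism C M T \<sigma> \<Longrightarrow> A \<in> obj C \<Longrightarrow> cod C (\<sigma> A) = mo T A"
  unfolding is_monad_morphism_def is_nat_trans_def hom_def by blast+

lemma mmor_natural:
  "is_monad_morphism C M T \<sigma> \<Longrightarrow> f \<in> arr C \<Longrightarrow> \<sigma> (cod C f) \<cdot> mm M f = mm T f \<cdot> \<sigma> (dom C f)"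
  unfolding is_monad_morphism_def is_nat_trans_def by blast

lemma mmor_unit [simp]: "is_monad_morphism C M T \<sigma> \<Longrightarrow> A \<in> obj C \<Longrightarrow> \<sigma> A \<cdot> unit M A = unit T A"
  unfolding is_monad_morphism_def by blast

lemma mmor_mult:
  "is_monad_morphism C M T \<sigma> \<Longrightarrow> A \<in> obj C \<Longrightarrow>
   \<sigma> A \<cdot> mult M A = mult T A \<cdot> (\<sigma> (mo T A) \<cdot> mm M (\<sigma> A))"
  unfolding is_monad_morphism_def by blast

lemma mmor_mult_comp:
  assumes "is_monad C M" "is_monad C T" "is_monad_morphism C M T \<sigma>" "A \<in> obj C"
    and "h \<in> arr C" "cod C h = mo M (mo M A)"
  shows "\<sigma> A \<cdot> (mult M A \<cdot> h) = mult T A \<cdot> (\<sigma> (mo T A) \<cdot> (mm M (\<sigma> A) \<cdot> h))"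
  using comp_eq_extend[OF mmor_mult[OF assms(3,4)], of h] assms by simp

end

locale category_with_binary_coproducts = category C for C :: "('o,'m) category_data" +
  fixes K :: "('o,'m) coproduct_choice"
  assumes is_coproduct_choice: "is_coproduct_choice C K"
begin

lemma coproduct:
  "A \<in> obj C \<Longrightarrow> B \<in> obj C \<Longrightarrow> is_coproduct C A B (cp K A B) (cinl K A B) (cinr K A B)"
  using is_coproduct_choice unfolding is_coproduct_choice_def by blast

lemma cp_in_obj [simp]: "A \<in> obj C \<Longrightarrow> B \<in> obj C \<Longrightarrow> cp K A B \<in> obj C"
  using coproduct unfolding is_coproduct_def by blast

lemma cinl_in_arr [simp]: "A \<in> obj C \<Longrightarrow> B \<in> obj C \<Longrightarrow> cinl K A B \<in> arr C"
  and dom_cinl [simp]: "A \<in> obj C \<Longrightarrow> B \<in> obj C \<Longrightarrow> dom C (cinl K A B) = A"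
  and cod_cinl [simp]: "A \<in> obj C \<Longrightarrow> B \<in> obj C \<Longrightarrow> cod C (cinl K A B) = cp K A B"
  and cinr_in_arr [simp]: "A \<in> obj C \<Longrightarrow> B \<in> obj C \<Longrightarrow> cinr K A B \<in> arr C"
  and dom_cinr [simp]: "A \<in> obj C \<Longrightarrow> B \<in> obj C \<Longrightarrow> dom C (cinr K A B) = B"
  and cod_cinr [simp]: "A \<in> obj C \<Longrightarrow> B \<in> obj C \<Longrightarrow> cod C (cinr K A B) = cp K A B"
  using coproduct unfolding is_coproduct_def hom_def by blast+

lemma copair_universal:
  assumes "f \<in> arr C" "g \<in> arr C" "cod C f = cod C g"
  shows "copair C K f g \<in> hom C (cp K (dom C f) (dom C g)) (cod C f)
      \<and> copair C K f g \<cdot> cinl K (dom C f) (dom C g) = f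
      \<and> copair C K f g \<cdot> cinr K (dom C f) (dom C g) = g"
  unfolding copair_def
proof (rule theI')
  show "\<exists>!h. h \<in> hom C (cp K (dom C f) (dom C g)) (cod C f)
      \<and> h \<cdot> cinl K (dom C f) (dom C g) = f \<and> h \<cdot> cinr K (dom C f) (dom C g) = g"
    using coproduct[of "dom C f" "dom C g"] assms unfolding is_coproduct_def hom_def by auto
qed

lemma copair_in_arr [simp]:
    "f \<in> arr C \<Longrightarrow> g \<in> arr C \<Longrightarrow> cod C f = cod C g \<Longrightarrow> copair C K f g \<in> arr C"
  and dom_copair [simp]:
    "f \<in> arr C \<Longrightarrow> g \<in> arr C \<Longrightarrow> cod C f = cod C g \<Longrightarrow> dom C (copair C K f g) = cp K (dom C f) (dom C g)"
  and cod_copair [simp]: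
    "f \<in> arr C \<Longrightarrow> g \<in> arr C \<Longrightarrow> cod C f = cod C g \<Longrightarrow> cod C (copair C K f g) = cod C f"
  using copair_universal unfolding hom_def by blast+

lemma copair_cinl [simp]:
    "f \<in> arr C \<Longrightarrow> g \<in> arr C \<Longrightarrow> cod C f = cod C g \<Longrightarrow> dom C f = A \<Longrightarrow> dom C g = B
     \<Longrightarrow> copair C K f g \<cdot> cinl K A B = f"
  and copair_cinr [simp]:
    "f \<in> arr C \<Longrightarrow> g \<in> arr C \<Longrightarrow> cod C f = cod C g \<Longrightarrow> dom C f = A \<Longrightarrow> dom C g = B
     \<Longrightarrow> copair C K f g \<cdot> cinr K A B = g"
  using copair_universal by blast+

lemma copair_cinl_comp [simp]:
    "f \<in> arr C \<Longrightarrow> g \<in> arr C \<Longrightarrow> cod C f = cod C g \<Longrightarrow> dom C f = A \<Longrightarrow> dom C g = B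
     \<Longrightarrow> h \<in> arr C \<Longrightarrow> cod C h = A \<Longrightarrow> copair C K f g \<cdot> (cinl K A B \<cdot> h) = f \<cdot> h"
  and copair_cinr_comp [simp]:
    "f \<in> arr C \<Longrightarrow> g \<in> arr C \<Longrightarrow> cod C f = cod C g \<Longrightarrow> dom C f = A \<Longrightarrow> dom C g = B
     \<Longrightarrow> h \<in> arr C \<Longrightarrow> cod C h = B \<Longrightarrow> copair C K f g \<cdot> (cinr K A B \<cdot> h) = g \<cdot> h"
  by (auto simp flip: comp_assoc)

lemma coproduct_arr_ext:
  assumes "A \<in> obj C" "B \<in> obj C"
    and "h \<in> arr C" "k \<in> arr C" "dom C h = cp K A B" "dom C k = cp K A B" "cod C h = cod C k"
    and "h \<cdot> cinl K A B = k \<cdot> cinl K A B" "h \<cdot> cinr K A B = k \<cdot> cinr K A B"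
  shows "h = k"
proof -
  let ?P = "\<lambda>x. x \<in> hom C (cp K A B) (cod C h)
              \<and> x \<cdot> cinl K A B = h \<cdot> cinl K A B \<and> x \<cdot> cinr K A B = h \<cdot> cinr K A B"
  have "\<exists>!x. ?P x"
    using coproduct[of A B] assms(1-3,5) unfolding is_coproduct_def hom_def by simp
  moreover have "?P h" "?P k"
    using assms unfolding hom_def by simp_all
  ultimately show ?thesis
    by (auto simp only: Ex1_def)
qed

lemma coprod_map_in_arr [simp]:
    "f \<in> arr C \<Longrightarrow> g \<in> arr C \<Longrightarrow> coprod_map C K f g \<in> arr C"
  and dom_coprod_map [simp]:
    "f \<in> arr C \<Longrightarrow> g \<in> arr C \<Longrightarrow> dom C (coprod_map C K f g) = cp K (dom C f) (dom C g)"
  and cod_coprod_map [simp]: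
    "f \<in> arr C \<Longrightarrow> g \<in> arr C \<Longrightarrow> cod C (coprod_map C K f g) = cp K (cod C f) (cod C g)"
  unfolding coprod_map_def by simp_all

lemma coprod_map_cinl [simp]:
    "f \<in> arr C \<Longrightarrow> g \<in> arr C \<Longrightarrow> dom C f = A \<Longrightarrow> dom C g = B
     \<Longrightarrow> coprod_map C K f g \<cdot> cinl K A B = cinl K (cod C f) (cod C g) \<cdot> f"
  and coprod_map_cinr [simp]:
    "f \<in> arr C \<Longrightarrow> g \<in> arr C \<Longrightarrow> dom C f = A \<Longrightarrow> dom C g = B
     \<Longrightarrow> coprod_map C K f g \<cdot> cinr K A B = cinr K (cod C f) (cod C g) \<cdot> g"
  unfolding coprod_map_def by simp_all

lemma coprod_map_cinl_comp [simp]: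
    "f \<in> arr C \<Longrightarrow> g \<in> arr C \<Longrightarrow> dom C f = A \<Longrightarrow> dom C g = B \<Longrightarrow> h \<in> arr C \<Longrightarrow> cod C h = A
     \<Longrightarrow> coprod_map C K f g \<cdot> (cinl K A B \<cdot> h) = cinl K (cod C f) (cod C g) \<cdot> (f \<cdot> h)"
  and coprod_map_cinr_comp [simp]:
    "f \<in> arr C \<Longrightarrow> g \<in> arr C \<Longrightarrow> dom C f = A \<Longrightarrow> dom C g = B \<Longrightarrow> h \<in> arr C \<Longrightarrow> cod C h = B
     \<Longrightarrow> coprod_map C K f g \<cdot> (cinr K A B \<cdot> h) = cinr K (cod C f) (cod C g) \<cdot> (g \<cdot> h)"
  by (auto simp flip: comp_assoc)

lemma coprod_map_idm [simp]:
  "A \<in> obj C \<Longrightarrow> B \<in> obj C \<Longrightarrow> coprod_map C K (idm C A) (idm C B) = idm C (cp K A B)"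
  by (rule coproduct_arr_ext[where A=A and B=B]) simp_all

lemma coprod_map_comp:
  assumes "f \<in> arr C" "g \<in> arr C" "f' \<in> arr C" "g' \<in> arr C" "cod C f = dom C g" "cod C f' = dom C g'"
  shows "coprod_map C K (g \<cdot> f) (g' \<cdot> f') = coprod_map C K g g' \<cdot> coprod_map C K f f'"
  by (rule coproduct_arr_ext[where A="dom C f" and B="dom C f'"]) (use assms in simp_all)

lemma mo_semifree [simp]: "mo (semifree C K M) A = cp K A (mo M A)"
  and mm_semifree [simp]: "mm (semifree C K M) f = coprod_map C K f (mm M f)"
  and unit_semifree [simp]: "unit (semifree C K M) A = cinl K A (mo M A)"
  by (simp_all add: semifree_def)

definition collapse :: "('o,'m) monad_data \<Rightarrow> 'o \<Rightarrow> 'm" where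
  "collapse M A = copair C K (unit M A) (idm C (mo M A))"

lemma mult_semifree [simp]:
  "mult (semifree C K M) A =
   copair C K (idm C (cp K A (mo M A))) (cinr K A (mo M A) \<cdot> (mult M A \<cdot> mm M (collapse M A)))"
  by (simp add: semifree_def collapse_def)

lemma collapse_in_arr [simp]: "is_monad C M \<Longrightarrow> A \<in> obj C \<Longrightarrow> collapse M A \<in> arr C"
  and dom_collapse [simp]: "is_monad C M \<Longrightarrow> A \<in> obj C \<Longrightarrow> dom C (collapse M A) = cp K A (mo M A)"
  and cod_collapse [simp]: "is_monad C M \<Longrightarrow> A \<in> obj C \<Longrightarrow> cod C (collapse M A) = mo M A"
  and collapse_cinl [simp]: "is_monad C M \<Longrightarrow> A \<in> obj C \<Longrightarrow> collapse M A \<cdot> cinl K A (mo M A) = unit M A"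
  and collapse_cinr [simp]:
    "is_monad C M \<Longrightarrow> A \<in> obj C \<Longrightarrow> collapse M A \<cdot> cinr K A (mo M A) = idm C (mo M A)"
  unfolding collapse_def by simp_all

lemma collapse_cinl_comp [simp]:
  "is_monad C M \<Longrightarrow> A \<in> obj C \<Longrightarrow> h \<in> arr C \<Longrightarrow> cod C h = A \<Longrightarrow>
   collapse M A \<cdot> (cinl K A (mo M A) \<cdot> h) = unit M A \<cdot> h"
  and collapse_cinr_comp [simp]:
  "is_monad C M \<Longrightarrow> A \<in> obj C \<Longrightarrow> h \<in> arr C \<Longrightarrow> cod C h = mo M A \<Longrightarrow>
   collapse M A \<cdot> (cinr K A (mo M A) \<cdot> h) = h"
  by (simp_all flip: comp_assoc)

lemma collapse_natural:
  assumes M: "is_monad C M" and f: "f \<in> arr C"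
  shows "collapse M (cod C f) \<cdot> coprod_map C K f (mm M f) = mm M f \<cdot> collapse M (dom C f)"
  by (rule coproduct_arr_ext[where A="dom C f" and B="mo M (dom C f)"])
    (use M f in \<open>simp_all add: unit_natural\<close>)

lemma mm_collapse_natural:
  assumes M: "is_monad C M" and f: "f \<in> arr C"
  shows "mm M (collapse M (cod C f)) \<cdot> mm M (coprod_map C K f (mm M f))
       = mm M (mm M f) \<cdot> mm M (collapse M (dom C f))"
  by (rule mm_comp_eq[OF M collapse_natural[OF M f]]) (use M f in simp_all)

lemma collapse_mult:
  assumes M: "is_monad C M" and A: "A \<in> obj C"
  shows "collapse M A \<cdot> mult (semifree C K M) A
       = mult M A \<cdot> (mm M (collapse M A) \<cdot> collapse M (cp K A (mo M A)))"
proof -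
  have unit_collapse: "mm M (collapse M A) \<cdot> unit M (cp K A (mo M A)) = unit M (mo M A) \<cdot> collapse M A"
    using unit_natural[OF M collapse_in_arr[OF M A]] M A by simp
  show ?thesis
    by (rule coproduct_arr_ext[where A="cp K A (mo M A)" and B="mo M (cp K A (mo M A))"])
      (use M A in \<open>simp_all add: unit_collapse\<close>)
qed

lemma mm_collapse_mult:
  assumes M: "is_monad C M" and A: "A \<in> obj C"
  shows "mm M (collapse M A) \<cdot> mm M (mult (semifree C K M) A)
       = mm M (mult M A) \<cdot> (mm M (mm M (collapse M A)) \<cdot> mm M (collapse M (cp K A (mo M A))))"
proof -
  have "mm M (collapse M A) \<cdot> mm M (mult (semifree C K M) A)
      = mm M (mult M A) \<cdot> mm M (mm M (collapse M A) \<cdot> collapse M (cp K A (mo M A)))"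
    by (rule mm_comp_eq[OF M collapse_mult[OF M A]]) (use M A in simp_all)
  then show ?thesis
    using M A by simp
qed

lemma semifree_is_endofunctor:
  "is_monad C M \<Longrightarrow> is_endofunctor C (mo (semifree C K M)) (mm (semifree C K M))"
  unfolding is_endofunctor_def hom_def by (simp add: coprod_map_comp)

lemma semifree_unit_is_nat_trans:
  "is_monad C M \<Longrightarrow>
   is_nat_trans C (\<lambda>A. A) (\<lambda>f. f) (mo (semifree C K M)) (mm (semifree C K M)) (unit (semifree C K M))"
  unfolding is_nat_trans_def hom_def by simp

lemma semifree_mult_natural:
  assumes M: "is_monad C M" and f: "f \<in> arr C"
  shows "mult (semifree C K M) (cod C f) \<cdot> mm (semifree C K M) (mm (semifree C K M) f)
       = mm (semifree C K M) f \<cdot> mult (semifree C K M) (dom C f)"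
  by (rule coproduct_arr_ext[where A="cp K (dom C f) (mo M (dom C f))"
                              and B="mo M (cp K (dom C f) (mo M (dom C f)))"])
    (use M f in \<open>simp_all add: mm_collapse_natural mult_natural_comp\<close>)

lemma semifree_mult_mm_unit:
  assumes M: "is_monad C M" and A: "A \<in> obj C"
  shows "mult (semifree C K M) A \<cdot> mm (semifree C K M) (unit (semifree C K M) A)
       = idm C (mo (semifree C K M) A)"
proof -
  have mm_collapse_cinl: "mm M (collapse M A) \<cdot> mm M (cinl K A (mo M A)) = mm M (unit M A)"
    using M A by (simp flip: mm_comp)
  show ?thesis
    by (rule coproduct_arr_ext[where A=A and B="mo M A"])
      (use M A in \<open>simp_all add: mm_collapse_cinl\<close>)
qed

lemma semifree_mult_assoc:
  assumes M: "is_monad C M" and A: "A \<in> obj C"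
  shows "mult (semifree C K M) A \<cdot> mm (semifree C K M) (mult (semifree C K M) A)
       = mult (semifree C K M) A \<cdot> mult (semifree C K M) (mo (semifree C K M) A)"
  by (rule coproduct_arr_ext[where A="cp K (cp K A (mo M A)) (mo M (cp K A (mo M A)))"
                              and B="mo M (cp K (cp K A (mo M A)) (mo M (cp K A (mo M A))))"])
    (use M A in \<open>simp_all add: mm_collapse_mult[OF M A, unfolded mult_semifree] mult_assoc_comp mult_natural_comp\<close>)

theorem semifree_is_monad:
  assumes M: "is_monad C M"
  shows "is_monad C (semifree C K M)"
  unfolding is_monad_def
  using semifree_is_endofunctor[OF M] semifree_unit_is_nat_trans[OF M]
    semifree_mult_natural[OF M] semifree_mult_mm_unit[OF M] semifree_mult_assoc[OF M] M
  by (auto simp add: is_nat_trans_def hom_def)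

lemma semifree_mor_apply [simp]: "semifree_mor C K \<sigma> A = coprod_map C K (idm C A) (\<sigma> A)"
  by (simp add: semifree_mor_def)

lemma collapse_semifree_mor:
  assumes "is_monad C M" "is_monad C T" "is_monad_morphism C M T \<sigma>" "A \<in> obj C"
  shows "collapse T A \<cdot> semifree_mor C K \<sigma> A = \<sigma> A \<cdot> collapse M A"
  by (rule coproduct_arr_ext[where A=A and B="mo M A"]) (use assms in simp_all)

lemma semifree_mor_natural:
  assumes "is_monad C M" "is_monad C T" "is_monad_morphism C M T \<sigma>" "f \<in> arr C"
  shows "semifree_mor C K \<sigma> (cod C f) \<cdot> mm (semifree C K M) f
       = mm (semifree C K T) f \<cdot> semifree_mor C K \<sigma> (dom C f)"
  by (rule coproduct_arr_ext[where A="dom C f" and B="mo M (dom C f)"])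
    (use assms in \<open>simp_all add: mmor_natural\<close>)

lemma semifree_mor_mult:
  assumes M: "is_monad C M" and T: "is_monad C T" and \<sigma>: "is_monad_morphism C M T \<sigma>"
    and A: "A \<in> obj C"
  shows "semifree_mor C K \<sigma> A \<cdot> mult (semifree C K M) A
       = mult (semifree C K T) A \<cdot> (semifree_mor C K \<sigma> (mo (semifree C K T) A)
           \<cdot> mm (semifree C K M) (semifree_mor C K \<sigma> A))"
proof -
  let ?X = "cp K A (mo T A)"
  have \<sigma>_collapse: "mm T (collapse T A) \<cdot> (\<sigma> ?X \<cdot> h) = \<sigma> (mo T A) \<cdot> (mm M (collapse T A) \<cdot> h)"
    if h: "h \<in> arr C" "cod C h = mo M ?X" for h
  proof (rule comp_eq_extend)
    show "mm T (collapse T A) \<cdot> \<sigma> ?X = \<sigma> (mo T A) \<cdot> mm M (collapse T A)"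
      using mmor_natural[OF \<sigma> collapse_in_arr[OF T A]] T A by simp
  qed (use assms h in simp_all)
  have mm_collapse: "mm M (collapse T A) \<cdot> mm M (coprod_map C K (idm C A) (\<sigma> A))
                   = mm M (\<sigma> A) \<cdot> mm M (collapse M A)"
    using mm_comp_eq[OF M collapse_semifree_mor[OF assms]] assms by simp
  show ?thesis
    by (rule coproduct_arr_ext[where A="cp K A (mo M A)" and B="mo M (cp K A (mo M A))"])
      (use assms in \<open>simp_all add: mmor_mult_comp \<sigma>_collapse mm_collapse\<close>)
qed

theorem semifree_mor_is_monad_morphism:
  assumes "is_monad C M" "is_monad C T" "is_monad_morphism C M T \<sigma>"
  shows "is_monad_morphism C (semifree C K M) (semifree C K T) (semifree_mor C K \<sigma>)"
  unfolding is_monad_morphism_def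
  using semifree_mor_natural[OF assms] semifree_mor_mult[OF assms] assms
  by (auto simp add: is_nat_trans_def hom_def)

lemma semifree_mor_id_mmor:
  "is_monad C M \<Longrightarrow> A \<in> obj C \<Longrightarrow> semifree_mor C K (id_mmor C M) A = id_mmor C (semifree C K M) A"
  by (simp add: id_mmor_def)

lemma semifree_mor_comp_mmor:
  assumes "is_monad C M" "is_monad C T" "is_monad C U"
    and "is_monad_morphism C M T \<sigma>" "is_monad_morphism C T U \<tau>" and "A \<in> obj C"
  shows "semifree_mor C K (comp_mmor C \<tau> \<sigma>) A
       = comp_mmor C (semifree_mor C K \<tau>) (semifree_mor C K \<sigma>) A"
  using assms by (simp add: comp_mmor_def flip: coprod_map_comp)

end

theorem lemma4:
  fixes C :: "('o,'m) category_data" and K :: "('o,'m) coproduct_choice"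
  assumes "is_category C"
    and "is_coproduct_choice C K"
    and "\<exists>I. is_initial C I"
  shows "(\<forall>M. is_monad C M \<longrightarrow> is_monad C (semifree C K M))
       \<and> (\<forall>M T \<sigma>. is_monad C M \<and> is_monad C T \<and> is_monad_morphism C M T \<sigma> \<longrightarrow>
            is_monad_morphism C (semifree C K M) (semifree C K T) (semifree_mor C K \<sigma>))
       \<and> (\<forall>M. is_monad C M \<longrightarrow>
            (\<forall>A\<in>obj C. semifree_mor C K (id_mmor C M) A = id_mmor C (semifree C K M) A))
       \<and> (\<forall>M T U \<sigma> \<tau>. is_monad C M \<and> is_monad C T \<and> is_monad C U
            \<and> is_monad_morphism C M T \<sigma> \<and> is_monad_morphism C T U \<tau> \<longrightarrow>
            (\<forall>A\<in>obj C. semifree_mor C K (comp_mmor C \<tau> \<sigma>) A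
                        = comp_mmor C (semifree_mor C K \<tau>) (semifree_mor C K \<sigma>) A))"
proof -
  interpret category_with_binary_coproducts C K
    using assms(1,2) by unfold_locales
  show ?thesis
    using semifree_is_monad semifree_mor_is_monad_morphism semifree_mor_id_mmor semifree_mor_comp_mmor
    by blast
qed

end
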